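(* Let $G$ be a strongly connected digraph. The map $f_{\mathrm{imcor}}$ has at least one fixed point in $\operatorname{Adj}(G)$. Furthermore, $A^*\in\operatorname{Adj}(G)$ is a fixed point of $f_{\mathrm{imcor}}$ (i.e., $A^*\in f_{\mathrm{imcor}}(A^* )$) if and only if $A^*$ is weight-balanced.
   Context: A digraph $G=(V,E)$, $V=\{v_1,\dots,v_n\}$, $E\subseteq V\times V$; strongly connected means a directed path exists between every ordered pair of distinct vertices. $\operatorname{Adj}(G)$ is the set of $A=(a_{ij})\in\mathbb{R}^{n\times n}_{\geq0}$ with $a_{ij}>0$ iff $(v_i,v_j)\in E$. Imbalance: $\omega(v_i)=\sum_j a_{ji}-\sum_j a_{ij}$; $A$ is weight-balanced if all imbalances vanish. For $A\in\operatorname{Adj}(G)$, $a_i^*=\min\{a_{ik}:k\neq i,\ a_{ik}\neq0\}$ and $J_i^*=\{j\neq i: a_{ij}=a_i^*\}$. $f_{\mathrm{imcor}}(A)$ is the set of $B\in\operatorname{Adj}(G)$ such that for each $i$ there is $j_i^*\in J_i^*$ with $b_{ij}=a_{ij}+\omega(v_i)$ if $\omega(v_i)>0$ and $j=j_i^*$, and $b_{ij}=a_{ij}$ otherwise (imbalances computed w.r.t. $A$). *)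

theory Defs
  imports Main "HOL-Library.Library"
begin

definition strongly_connected :: "('v \<times> 'v) set \<Rightarrow> bool" where
  "strongly_connected E \<longleftrightarrow> (\<forall>i j. i \<noteq> j \<longrightarrow> (i, j) \<in> E\<^sup>+)"

definition Adj :: "('v \<times> 'v) set \<Rightarrow> ('v \<Rightarrow> 'v \<Rightarrow> real) set" where
  "Adj E = {A. \<forall>i j. A i j \<ge> 0 \<and> (A i j > 0 \<longleftrightarrow> (i, j) \<in> E)}"

definition imbalance :: "('v::finite \<Rightarrow> 'v \<Rightarrow> real) \<Rightarrow> 'v \<Rightarrow> real" where
  "imbalance A i = (\<Sum>j\<in>UNIV. A j i) - (\<Sum>j\<in>UNIV. A i j)"

definition weight_balanced :: "('v::finite \<Rightarrow> 'v \<Rightarrow> real) \<Rightarrow> bool" where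
  "weight_balanced A \<longleftrightarrow> (\<forall>i. imbalance A i = 0)"

definition min_out :: "('v::finite \<Rightarrow> 'v \<Rightarrow> real) \<Rightarrow> 'v \<Rightarrow> real" where
  "min_out A i = Min {A i k | k. k \<noteq> i \<and> A i k \<noteq> 0}"

definition Jstar :: "('v::finite \<Rightarrow> 'v \<Rightarrow> real) \<Rightarrow> 'v \<Rightarrow> 'v set" where
  "Jstar A i = {j. j \<noteq> i \<and> A i j = min_out A i}"

definition f_imcor :: "('v \<times> 'v) set \<Rightarrow> ('v::finite \<Rightarrow> 'v \<Rightarrow> real) \<Rightarrow> ('v \<Rightarrow> 'v \<Rightarrow> real) set" where
  "f_imcor E A = {B \<in> Adj E. \<forall>i. \<exists>j. (imbalance A i > 0 \<longrightarrow> j \<in> Jstar A i) \<and>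
      (\<forall>k. B i k = (if imbalance A i > 0 \<and> k = j then A i k + imbalance A i else A i k))}"

end

theory Submission
  imports Defs
begin

text \<open>Every edge of a strongly connected digraph lies on a cycle, and the unit flow around
  a cycle is weight-balanced and nonnegative. Adding such cycle flows for all edges gives a
  weight-balanced matrix in \<open>Adj E\<close>. For the characterisation: a fixed point of
  \<open>f_imcor\<close> cannot have a vertex of positive imbalance, since correcting it would change
  an entry. As the imbalances always sum to zero, nonpositive imbalances must all vanish.\<close>

definition supported_in :: "('v \<times> 'v) set \<Rightarrow> ('v \<Rightarrow> 'v \<Rightarrow> real) \<Rightarrow> bool" where
  "supported_in E W \<longleftrightarrow> (\<forall>p q. 0 \<le> W p q \<and> (0 < W p q \<longrightarrow> (p, q) \<in> E))"

definition unit_flow :: "'v \<Rightarrow> 'v \<Rightarrow> 'v \<Rightarrow> 'v \<Rightarrow> real" where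
  "unit_flow x y = (\<lambda>p q. of_bool (p = x \<and> q = y))"

lemma supported_in_zero: "supported_in E (\<lambda>p q. 0)"
  by (simp add: supported_in_def)

lemma supported_in_add:
  "supported_in E V \<Longrightarrow> supported_in E W \<Longrightarrow> supported_in E (\<lambda>p q. V p q + W p q)"
  unfolding supported_in_def by (smt (verit))

lemma supported_in_unit_flow: "(x, y) \<in> E \<Longrightarrow> supported_in E (unit_flow x y)"
  by (simp add: supported_in_def unit_flow_def)

lemma imbalance_zero: "imbalance (\<lambda>p q. 0) v = 0"
  by (simp add: imbalance_def)

lemma imbalance_add: "imbalance (\<lambda>p q. V p q + W p q) v = imbalance V v + imbalance W v"
  by (simp add: imbalance_def sum.distrib)

lemma imbalance_unit_flow:
  "imbalance (unit_flow x y) (v::'v::finite) = of_bool (v = y) - of_bool (v = x)"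
  by (simp add: imbalance_def unit_flow_def)

lemma sum_imbalance_eq_0: "(\<Sum>v\<in>UNIV. imbalance (A::'v::finite \<Rightarrow> _) v) = 0"
  unfolding imbalance_def sum_subtractf using sum.swap[of "\<lambda>v j. A j v" UNIV UNIV] by simp

lemma weight_balanced_iff_imbalance_nonpos:
  "weight_balanced A \<longleftrightarrow> (\<forall>v. imbalance (A::'v::finite \<Rightarrow> _) v \<le> 0)"
proof
  assume nonpos: "\<forall>v. imbalance A v \<le> 0"
  have "(\<Sum>v\<in>UNIV. - imbalance A v) = 0"
    using sum_imbalance_eq_0[of A] by (simp add: sum_negf)
  then have "\<forall>v. - imbalance A v = 0"
    using sum_nonneg_eq_0_iff[of UNIV "\<lambda>v. - imbalance A v"] nonpos by simp
  then show "weight_balanced A"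
    by (simp add: weight_balanced_def)
qed (simp add: weight_balanced_def)

lemma path_flow:
  assumes "(a, b) \<in> E\<^sup>*"
  obtains W :: "'v::finite \<Rightarrow> 'v \<Rightarrow> real"
  where "supported_in E W" "\<And>v. imbalance W v = of_bool (v = b) - of_bool (v = a)"
  using assms
proof (induction arbitrary: thesis rule: rtrancl_induct)
  case base
  then show ?case
    using supported_in_zero imbalance_zero by fastforce
next
  case (step y z)
  obtain W where "supported_in E W" "\<And>v. imbalance W v = of_bool (v = y) - of_bool (v = a)"
    using step.IH by blast
  then show ?case
    using step.prems[of "\<lambda>p q. W p q + unit_flow y z p q"] step.hyps(2)
    by (simp add: supported_in_add supported_in_unit_flow imbalance_add imbalance_unit_flow)
qed

lemma cycle_flow_through_edge:
  assumes "strongly_connected E" and "(i, j) \<in> E"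
  obtains W :: "'v::finite \<Rightarrow> 'v \<Rightarrow> real"
  where "supported_in E W" "weight_balanced W" "0 < W i j"
proof -
  have "(j, i) \<in> E\<^sup>*"
    using assms(1) unfolding strongly_connected_def by (metis rtrancl_eq_or_trancl)
  then obtain V :: "'v \<Rightarrow> 'v \<Rightarrow> real"
    where V: "supported_in E V" "\<And>v. imbalance V v = of_bool (v = i) - of_bool (v = j)"
    using path_flow by blast
  show ?thesis
  proof (rule that[of "\<lambda>p q. V p q + unit_flow i j p q"])
    show "supported_in E (\<lambda>p q. V p q + unit_flow i j p q)"
      using V(1) assms(2) by (simp add: supported_in_add supported_in_unit_flow)
    show "weight_balanced (\<lambda>p q. V p q + unit_flow i j p q)"
      using V(2) by (simp add: weight_balanced_def imbalance_add imbalance_unit_flow)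
    have "0 \<le> V i j"
      using V(1) by (simp add: supported_in_def)
    then show "0 < V i j + unit_flow i j i j"
      by (simp add: unit_flow_def)
  qed
qed

lemma balanced_flow_through_edges:
  assumes "strongly_connected E" and "finite F" and "F \<subseteq> E"
  obtains W :: "'v::finite \<Rightarrow> 'v \<Rightarrow> real"
  where "supported_in E W" "weight_balanced W" "\<And>p q. (p, q) \<in> F \<Longrightarrow> 0 < W p q"
  using assms(2,3)
proof (induction arbitrary: thesis rule: finite_induct)
  case empty
  then show ?case
    using supported_in_zero imbalance_zero by (fastforce simp: weight_balanced_def)
next
  case (insert e F)
  obtain W where W: "supported_in E W" "weight_balanced W" "\<And>p q. (p, q) \<in> F \<Longrightarrow> 0 < W p q"
    using insert.IH insert.prems(2) by blast
  obtain V where V: "supported_in E V" "weight_balanced V" "0 < V (fst e) (snd e)"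
    using cycle_flow_through_edge[OF assms(1), of "fst e" "snd e"] insert.prems(2) by auto
  show ?case
  proof (rule insert.prems(1)[of "\<lambda>p q. W p q + V p q"])
    show "supported_in E (\<lambda>p q. W p q + V p q)"
      using W(1) V(1) by (rule supported_in_add)
    show "weight_balanced (\<lambda>p q. W p q + V p q)"
      using W(2) V(2) by (simp add: weight_balanced_def imbalance_add)
    fix p q
    assume "(p, q) \<in> insert e F"
    moreover have "0 \<le> W p q" "0 \<le> V p q"
      using W(1) V(1) by (simp_all add: supported_in_def)
    ultimately show "0 < W p q + V p q"
      using W(3) V(3) by (auto intro: add_pos_nonneg add_nonneg_pos)
  qed
qed

lemma weight_balanced_Adj_exists:
  fixes E :: "('v::finite \<times> 'v) set"
  assumes "strongly_connected E"
  shows "\<exists>A\<in>Adj E. weight_balanced A"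
proof -
  obtain W :: "'v \<Rightarrow> 'v \<Rightarrow> real"
    where W: "supported_in E W" "weight_balanced W" "\<And>p q. (p, q) \<in> E \<Longrightarrow> 0 < W p q"
    using balanced_flow_through_edges[OF assms finite subset_refl] by blast
  have "W \<in> Adj E"
    using W(1,3) unfolding Adj_def supported_in_def by blast
  then show ?thesis
    using W(2) by blast
qed

lemma fixed_point_f_imcor_iff_weight_balanced:
  fixes A :: "'v::finite \<Rightarrow> 'v \<Rightarrow> real"
  assumes "A \<in> Adj E"
  shows "A \<in> f_imcor E A \<longleftrightarrow> weight_balanced A"
proof
  assume fixed: "A \<in> f_imcor E A"
  have "imbalance A i \<le> 0" for i
  proof -
    obtain j where
      "\<forall>k. A i k = (if 0 < imbalance A i \<and> k = j then A i k + imbalance A i else A i k)"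
      using fixed unfolding f_imcor_def by blast
    then have "A i j = (if 0 < imbalance A i then A i j + imbalance A i else A i j)"
      by (metis (full_types))
    then show ?thesis
      by (cases "0 < imbalance A i") auto
  qed
  then show "weight_balanced A"
    by (simp add: weight_balanced_iff_imbalance_nonpos)
next
  assume "weight_balanced A"
  then show "A \<in> f_imcor E A"
    using assms unfolding f_imcor_def weight_balanced_def by auto
qed

theorem lemma4p2:
  fixes E :: "('v::finite \<times> 'v) set"
  assumes "strongly_connected E"
  shows "(\<exists>A\<in>Adj E. A \<in> f_imcor E A) \<and>
         (\<forall>A\<in>Adj E. A \<in> f_imcor E A \<longleftrightarrow> weight_balanced A)"
  using weight_balanced_Adj_exists[OF assms] fixed_point_f_imcor_iff_weight_balanced by blast

end
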